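(* Let $z_1,\dots,z_m\in\partial\mathbb{D}$ be distinct, $\mu=\sum_{j=1}^m\mu_j\delta_{z_j}$ with $\mu_j>0$, $\sum\mu_j=1$, and $G$ real-valued on $\{z_1,\dots,z_m\}$, numbered so that $G(z_1)\ge\cdots\ge G(z_m)$. Let $K_1,\dots,K_L$ be the $K$-groups $K_i=\{k_{i-1}+1,\dots,k_i\}$ ($k_0=0$, $k_L=m$), i.e. maximal blocks of consecutive indices on which $G(z_\cdot)$ is constant. Let $\mu_t=e^{tG}\mu/\int e^{tG}d\mu$, and let $\mu^{(K_i)}=\sum_{\ell\in K_i}\mu^{(K_i)}_\ell\delta_{z_\ell}$ with \[ \mu^{(K_i)}_\ell=\frac{\bigl[\prod_{p=1}^{k_{i-1}}|z_\ell-z_p|^2\bigr]\mu_\ell}{\sum_{r\in K_i}\bigl[\prod_{p=1}^{k_{i-1}}|z_r-z_p|^2\bigr]\mu_r}. \] Then for every $i$ and $\ell\in K_i$, coefficientwise (equivalently, uniformly on compact subsets of $\mathbb{C}$), \[ \lim_{t\to\infty}\Phi_\ell(z;\mu_t)=\prod_{p=1}^{k_{i-1}}(z-z_p)\;\Phi_{\ell-k_{i-1}}(z;\mu^{(K_i)}). \]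
   Context: $\Phi_n(z;\nu)$ denotes the monic orthogonal polynomial of degree $n$ for a positive measure $\nu$ on $\partial\mathbb{D}$ whose support has at least $n$ points; $\Phi_0=1$; empty products equal $1$. *)

theory Defs
  imports "HOL-Analysis.Analysis" "HOL-Computational_Algebra.Polynomial"
begin

text \<open>A finitely supported positive measure on the unit circle is represented by
  atoms z j (j in a finite index set I) with weights w j.\<close>

definition disc_inner :: "(nat \<Rightarrow> complex) \<Rightarrow> (nat \<Rightarrow> real) \<Rightarrow> nat set
    \<Rightarrow> complex poly \<Rightarrow> complex poly \<Rightarrow> complex" where
  "disc_inner z w I p q = (\<Sum>j\<in>I. complex_of_real (w j) * poly p (z j) * cnj (poly q (z j)))"

definition opuc :: "(nat \<Rightarrow> complex) \<Rightarrow> (nat \<Rightarrow> real) \<Rightarrow> nat set \<Rightarrow> nat \<Rightarrow> complex poly" where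
  "opuc z w I n = (THE p. degree p = n \<and> coeff p n = 1 \<and>
      (\<forall>k<n. disc_inner z w I p (monom 1 k) = 0))"

definition tilt_weights :: "(nat \<Rightarrow> complex) \<Rightarrow> (complex \<Rightarrow> real) \<Rightarrow> (nat \<Rightarrow> real)
    \<Rightarrow> nat \<Rightarrow> real \<Rightarrow> nat \<Rightarrow> real" where
  "tilt_weights z G \<mu> m t j =
     exp (t * G (z j)) * \<mu> j / (\<Sum>r\<in>{1..m}. exp (t * G (z r)) * \<mu> r)"

definition Kgroup :: "(nat \<Rightarrow> nat) \<Rightarrow> nat \<Rightarrow> nat set" where
  "Kgroup k i = {k (i - 1) + 1 .. k i}"

definition Kweights :: "(nat \<Rightarrow> complex) \<Rightarrow> (nat \<Rightarrow> real) \<Rightarrow> (nat \<Rightarrow> nat) \<Rightarrow> nat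
    \<Rightarrow> nat \<Rightarrow> real" where
  "Kweights z \<mu> k i l =
     (\<Prod>p\<in>{1..k (i - 1)}. (cmod (z l - z p))\<^sup>2) * \<mu> l /
     (\<Sum>r\<in>Kgroup k i. (\<Prod>p\<in>{1..k (i - 1)}. (cmod (z r - z p))\<^sup>2) * \<mu> r)"

end

(*
  Let g be the value of G on the K-group K_i, and split the nodes into B = {1..k_(i-1)}
  (where G > g), C = K_i (where G = g) and D (where G < g).  Up to a constant factor, which
  does not change orthogonal polynomials, mu_t has the weights exp(t (G(z_j) - g)) mu_j: they
  blow up on B, are constant on C and vanish on D.

  Let Q = Pi_B * Phi_r(.; |Pi_B|^2 mu on C), with Pi_B the monic polynomial vanishing on B and
  r = l - k_(i-1).  Q minimises the L2(mu on C)-norm among monic polynomials of degree l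
  vanishing on B, and its mu_t-norm tends to that minimum.  By the extremal property of
  Phi_l(.; mu_t), the mu_t-norm of Phi_l is at most that of Q, so Phi_l tends to zero on B;
  hence its L2(mu on C)-norm is asymptotically at least the minimum, and Pythagoras gives
  ||Q - Phi_l||_(mu_t) -> 0.  As Q - Phi_l has degree < l <= |B u C| and tends to zero at the
  nodes of B u C, where the weights of mu_t stay bounded below, Lagrange interpolation turns
  this into convergence of the coefficients.
*)

theory Submission
  imports Defs "HOL-Real_Asymp.Real_Asymp"
begin

section \<open>Discrete inner product and squared norm\<close>

lemma disc_inner_add_left: "disc_inner z w I (p + q) r = disc_inner z w I p r + disc_inner z w I q r"
  unfolding disc_inner_def by (simp add: algebra_simps sum.distrib)

lemma disc_inner_add_right: "disc_inner z w I r (p + q) = disc_inner z w I r p + disc_inner z w I r q"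
  unfolding disc_inner_def by (simp add: algebra_simps sum.distrib)

lemma disc_inner_diff_left: "disc_inner z w I (p - q) r = disc_inner z w I p r - disc_inner z w I q r"
  unfolding disc_inner_def by (simp add: algebra_simps sum_subtractf)

lemma disc_inner_smult_left: "disc_inner z w I (smult c p) r = c * disc_inner z w I p r"
  unfolding disc_inner_def by (simp add: algebra_simps sum_distrib_left)

lemma disc_inner_smult_right: "disc_inner z w I r (smult c p) = cnj c * disc_inner z w I r p"
  unfolding disc_inner_def by (simp add: algebra_simps sum_distrib_left)

lemma disc_inner_sum_left: "disc_inner z w I (\<Sum>a\<in>A. f a) r = (\<Sum>a\<in>A. disc_inner z w I (f a) r)"
  unfolding disc_inner_def poly_sum sum_distrib_left sum_distrib_right by (rule sum.swap)

lemma disc_inner_sum_right: "disc_inner z w I r (\<Sum>a\<in>A. f a) = (\<Sum>a\<in>A. disc_inner z w I r (f a))"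
  unfolding disc_inner_def poly_sum cnj_sum sum_distrib_left by (rule sum.swap)

lemma disc_inner_commute: "disc_inner z w I q p = cnj (disc_inner z w I p q)"
  unfolding disc_inner_def by (simp add: algebra_simps)

lemma disc_inner_mult_mult:
  "disc_inner z w I (h * p) (h * q) = disc_inner z (\<lambda>j. (cmod (poly h (z j)))\<^sup>2 * w j) I p q"
  unfolding disc_inner_def
  by (intro sum.cong refl) (simp add: of_real_mult algebra_simps flip: complex_norm_square)

definition disc_sqnorm :: "(nat \<Rightarrow> complex) \<Rightarrow> (nat \<Rightarrow> real) \<Rightarrow> nat set \<Rightarrow> complex poly \<Rightarrow> real"
  where "disc_sqnorm z w I p = (\<Sum>j\<in>I. w j * (cmod (poly p (z j)))\<^sup>2)"

lemma disc_inner_self: "disc_inner z w I p p = of_real (disc_sqnorm z w I p)"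
  unfolding disc_inner_def disc_sqnorm_def of_real_sum
  by (intro sum.cong refl) (simp add: mult.assoc flip: complex_norm_square)

lemma disc_sqnorm_nonneg: "(\<forall>j\<in>I. 0 \<le> w j) \<Longrightarrow> 0 \<le> disc_sqnorm z w I p"
  unfolding disc_sqnorm_def by (intro sum_nonneg) auto

lemma disc_sqnorm_ge_term:
  "finite I \<Longrightarrow> (\<forall>j\<in>I. 0 \<le> w j) \<Longrightarrow> j \<in> I
    \<Longrightarrow> w j * (cmod (poly p (z j)))\<^sup>2 \<le> disc_sqnorm z w I p"
  unfolding disc_sqnorm_def by (rule member_le_sum) auto

lemma disc_sqnorm_mono_set:
  "finite I \<Longrightarrow> (\<forall>j\<in>I. 0 \<le> w j) \<Longrightarrow> J \<subseteq> I \<Longrightarrow> disc_sqnorm z w J p \<le> disc_sqnorm z w I p"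
  unfolding disc_sqnorm_def by (rule sum_mono2) auto

lemma disc_sqnorm_add_orthogonal:
  assumes "disc_inner z w I p q = 0"
  shows "disc_sqnorm z w I (p + q) = disc_sqnorm z w I p + disc_sqnorm z w I q"
proof -
  have "disc_inner z w I q p = 0" using assms by (subst disc_inner_commute) simp
  with assms have "disc_inner z w I (p + q) (p + q) = disc_inner z w I p p + disc_inner z w I q q"
    by (simp add: disc_inner_add_left disc_inner_add_right)
  then show ?thesis by (simp add: disc_inner_self flip: of_real_add)
qed

lemma tendsto_disc_sqnorm_zero:
  assumes "\<And>j. j \<in> I \<Longrightarrow> ((\<lambda>t. poly (f t) (z j)) \<longlongrightarrow> 0) F"
  shows "((\<lambda>t. disc_sqnorm z w I (f t)) \<longlongrightarrow> 0) F"
  unfolding disc_sqnorm_def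
  by (intro tendsto_null_sum tendsto_mult_right_zero tendsto_null_power tendsto_norm_zero assms) auto

lemma norm_add_sq_ge:
  fixes a b :: "'a::real_normed_vector"
  assumes "0 < e"
  shows "(1 - e) * (norm a)\<^sup>2 - (norm b)\<^sup>2 / e \<le> (norm (a + b))\<^sup>2"
proof -
  define x y where "x = norm a" and "y = norm b"
  have "e * ((x - y)\<^sup>2 - ((1 - e) * x\<^sup>2 - y\<^sup>2 / e)) = (e * x - y)\<^sup>2 + e * y\<^sup>2"
    using assms by (simp add: field_simps power2_eq_square)
  also have "\<dots> \<ge> 0" using assms by simp
  finally have "(1 - e) * x\<^sup>2 - y\<^sup>2 / e \<le> (x - y)\<^sup>2"
    using assms by (simp add: zero_le_mult_iff)
  also have "\<dots> = \<bar>norm a - norm (- b)\<bar>\<^sup>2" by (simp add: x_def y_def)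
  also have "\<dots> \<le> (norm (a + b))\<^sup>2"
    using norm_triangle_ineq3[of a "- b"] by (intro power_mono) auto
  finally show ?thesis by (simp add: x_def y_def)
qed

lemma disc_sqnorm_add_ge:
  assumes "\<forall>j\<in>I. 0 \<le> w j" "0 < e"
  shows "(1 - e) * disc_sqnorm z w I p - disc_sqnorm z w I q / e \<le> disc_sqnorm z w I (p + q)"
proof -
  have "(1 - e) * disc_sqnorm z w I p - disc_sqnorm z w I q / e =
      (\<Sum>j\<in>I. w j * ((1 - e) * (cmod (poly p (z j)))\<^sup>2 - (cmod (poly q (z j)))\<^sup>2 / e))"
    unfolding disc_sqnorm_def sum_distrib_left sum_divide_distrib sum_subtractf[symmetric]
    by (intro sum.cong refl) (simp add: algebra_simps)
  also have "\<dots> \<le> disc_sqnorm z w I (p + q)"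
    unfolding disc_sqnorm_def poly_add
    using assms norm_add_sq_ge by (intro sum_mono mult_left_mono) auto
  finally show ?thesis .
qed

lemma tendsto_zero_of_sq_norm_le:
  fixes x :: "'a \<Rightarrow> 'b::real_normed_vector"
  assumes "0 < c" "eventually (\<lambda>t. c * (norm (x t))\<^sup>2 \<le> e t) F" "(e \<longlongrightarrow> 0) F"
  shows "(x \<longlongrightarrow> 0) F"
proof -
  have "((\<lambda>t. (norm (x t))\<^sup>2) \<longlongrightarrow> 0) F"
  proof (rule tendsto_sandwich)
    show "eventually (\<lambda>t. (norm (x t))\<^sup>2 \<le> e t / c) F"
      using assms(2) by eventually_elim (use assms(1) in \<open>simp add: field_simps\<close>)
  qed (use tendsto_divide_zero[OF assms(3)] in auto)
  then have "((\<lambda>t. sqrt ((norm (x t))\<^sup>2)) \<longlongrightarrow> sqrt 0) F" by (rule tendsto_real_sqrt)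
  then show ?thesis by (simp add: tendsto_norm_zero_iff)
qed

section \<open>Monic orthogonal polynomials\<close>

lemma poly_eq_0_of_vanishing:
  fixes p :: "complex poly"
  assumes "finite S" "inj_on z S" "\<And>s. s \<in> S \<Longrightarrow> poly p (z s) = 0" "\<forall>i\<ge>card S. coeff p i = 0"
  shows "p = 0"
proof (rule ccontr)
  assume "p \<noteq> 0"
  then have "degree p < card (z ` S)"
    using assms(4) card_image[OF assms(2)] by (simp add: degree_lessI)
  then show False
    using poly_eqI_degree[of "z ` S" p 0] assms(3) \<open>p \<noteq> 0\<close> by fastforce
qed

lemma poly_eq_0_of_disc_sqnorm_eq_0:
  assumes "finite I" "inj_on z I" "\<forall>j\<in>I. 0 < w j"
    and "disc_sqnorm z w I p = 0" "\<forall>i\<ge>card I. coeff p i = 0"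
  shows "p = 0"
proof (rule poly_eq_0_of_vanishing[OF assms(1,2) _ assms(5)])
  fix s assume "s \<in> I"
  have "\<forall>j\<in>I. w j * (cmod (poly p (z j)))\<^sup>2 = 0"
    using assms(4) sum_nonneg_eq_0_iff[OF assms(1), of "\<lambda>j. w j * (cmod (poly p (z j)))\<^sup>2"] assms(3)
    unfolding disc_sqnorm_def by (force intro: less_imp_le)
  then show "poly p (z s) = 0" using assms(3) \<open>s \<in> I\<close> by fastforce
qed

lemma coeff_diff_monic_eq_0:
  assumes "degree p = n" "coeff p n = 1" "degree q = n" "coeff q n = 1" "n \<le> i"
  shows "coeff (p - q) i = 0"
  using assms by (cases "i = n") (simp_all add: coeff_eq_0)

definition monic_orth :: "(nat \<Rightarrow> complex) \<Rightarrow> (nat \<Rightarrow> real) \<Rightarrow> nat set \<Rightarrow> nat \<Rightarrow> complex poly \<Rightarrow> bool"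
  where "monic_orth z w I n p \<longleftrightarrow>
    degree p = n \<and> coeff p n = 1 \<and> (\<forall>k<n. disc_inner z w I p (monom 1 k) = 0)"

lemma disc_inner_eq_0_of_monic_orth:
  assumes "monic_orth z w I n p" "\<forall>i\<ge>n. coeff q i = 0"
  shows "disc_inner z w I p q = 0"
proof -
  have "disc_inner z w I p (\<Sum>i\<le>degree q. smult (coeff q i) (monom 1 i)) =
      (\<Sum>i\<le>degree q. cnj (coeff q i) * disc_inner z w I p (monom 1 i))"
    by (simp add: disc_inner_sum_right disc_inner_smult_right)
  then have "disc_inner z w I p q = (\<Sum>i\<le>degree q. cnj (coeff q i) * disc_inner z w I p (monom 1 i))"
    by (simp add: smult_monom poly_as_sum_of_monoms)
  also have "\<dots> = 0"
  proof (intro sum.neutral ballI)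
    fix i
    show "cnj (coeff q i) * disc_inner z w I p (monom 1 i) = 0"
      using assms unfolding monic_orth_def by (cases "i < n") simp_all
  qed
  finally show ?thesis .
qed

lemma monic_orth_unique:
  assumes "finite I" "inj_on z I" "\<forall>j\<in>I. 0 < w j" "n \<le> card I"
    and "monic_orth z w I n p" "monic_orth z w I n q"
  shows "p = q"
proof -
  have coeff_diff: "\<forall>i\<ge>n. coeff (p - q) i = 0"
    using assms(5,6) coeff_diff_monic_eq_0 unfolding monic_orth_def by blast
  have "disc_inner z w I (p - q) (p - q) = 0"
    unfolding disc_inner_diff_left
    using disc_inner_eq_0_of_monic_orth[OF _ coeff_diff] assms(5,6) by simp
  then have "disc_sqnorm z w I (p - q) = 0" by (simp add: disc_inner_self)
  moreover have "\<forall>i\<ge>card I. coeff (p - q) i = 0" using coeff_diff assms(4) by auto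
  ultimately have "p - q = 0" by (rule poly_eq_0_of_disc_sqnorm_eq_0[OF assms(1-3)])
  then show ?thesis by simp
qed

lemma eq_sum_smult_monic:
  fixes f :: "nat \<Rightarrow> 'a::comm_ring_1 poly"
  assumes "\<And>k. k < n \<Longrightarrow> degree (f k) = k \<and> coeff (f k) k = 1" "\<forall>i\<ge>n. coeff q i = 0"
  shows "\<exists>c. q = (\<Sum>k<n. smult (c k) (f k))"
  using assms
proof (induction n arbitrary: q)
  case 0
  then show ?case by (simp add: poly_eq_iff)
next
  case (Suc n)
  define q' where "q' = q - smult (coeff q n) (f n)"
  have "\<forall>i\<ge>n. coeff q' i = 0"
  proof (intro allI impI)
    fix i assume "n \<le> i"
    then show "coeff q' i = 0"
      using Suc.prems(1)[of n] Suc.prems(2) by (cases "i = n") (auto simp: q'_def coeff_eq_0)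
  qed
  then obtain c where "q' = (\<Sum>k<n. smult (c k) (f k))"
    using Suc.IH Suc.prems(1) by force
  then have "q = (\<Sum>k<Suc n. smult ((c(n := coeff q n)) k) (f k))"
    by (simp add: q'_def algebra_simps)
  then show ?case by blast
qed

lemma disc_inner_monic_orth_eq_0:
  assumes "monic_orth z w I j p" "monic_orth z w I k q" "j \<noteq> k"
  shows "disc_inner z w I p q = 0"
proof (cases "k < j")
  case True
  then show ?thesis
    using assms(2) by (intro disc_inner_eq_0_of_monic_orth[OF assms(1)]) (auto simp: monic_orth_def coeff_eq_0)
next
  case False
  then have "disc_inner z w I q p = 0"
    using assms(1,3) by (intro disc_inner_eq_0_of_monic_orth[OF assms(2)]) (auto simp: monic_orth_def coeff_eq_0)
  then show ?thesis by (subst disc_inner_commute) simp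
qed

lemma disc_inner_self_neq_0:
  assumes "finite I" "inj_on z I" "\<forall>j\<in>I. 0 < w j" "p \<noteq> 0" "degree p < card I"
  shows "disc_inner z w I p p \<noteq> 0"
  using poly_eq_0_of_disc_sqnorm_eq_0[OF assms(1-3)] assms(4,5)
  by (auto simp: disc_inner_self coeff_eq_0)

lemma monic_orth_step:
  assumes "finite I" "inj_on z I" "\<forall>j\<in>I. 0 < w j" "n \<le> card I"
    and f: "\<And>k. k < n \<Longrightarrow> monic_orth z w I k (f k)"
  defines "c k \<equiv> disc_inner z w I (monom 1 n) (f k) / disc_inner z w I (f k) (f k)"
  shows "monic_orth z w I n (monom 1 n - (\<Sum>k<n. smult (c k) (f k)))"
    (is "monic_orth z w I n ?p")
proof -
  have f_monic: "degree (f k) = k" "coeff (f k) k = 1" if "k < n" for k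
    using f[OF that] unfolding monic_orth_def by auto
  have orth_f: "disc_inner z w I ?p (f j) = 0" if "j < n" for j
  proof -
    have "(\<Sum>k<n. c k * disc_inner z w I (f k) (f j)) = c j * disc_inner z w I (f j) (f j)"
      using disc_inner_monic_orth_eq_0[OF f f] that by (subst sum.remove[of _ j]) auto
    also have "\<dots> = disc_inner z w I (monom 1 n) (f j)"
    proof -
      have "f j \<noteq> 0" "degree (f j) < card I" using f_monic[OF that] that assms(4) by auto
      then have "disc_inner z w I (f j) (f j) \<noteq> 0" by (rule disc_inner_self_neq_0[OF assms(1-3)])
      then show ?thesis by (simp add: c_def)
    qed
    finally show ?thesis
      unfolding disc_inner_diff_left disc_inner_sum_left disc_inner_smult_left by simp
  qed
  have orth_monom: "disc_inner z w I ?p (monom 1 k) = 0" if "k < n" for k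
  proof -
    have "\<forall>i\<ge>n. coeff (monom 1 k) i = 0" using that by (simp add: coeff_monom)
    then obtain a where a: "monom 1 k = (\<Sum>i<n. smult (a i) (f i))"
      using eq_sum_smult_monic[of n f "monom 1 k"] f_monic by blast
    show ?thesis
      unfolding a disc_inner_sum_right disc_inner_smult_right using orth_f by simp
  qed
  have "coeff (\<Sum>k<n. smult (c k) (f k)) i = 0" if "n \<le> i" for i
    unfolding coeff_sum coeff_smult using f_monic that by (intro sum.neutral) (auto intro: coeff_eq_0)
  then have "coeff ?p n = 1" "\<forall>i>n. coeff ?p i = 0" by (auto simp: coeff_monom)
  moreover from this have "degree ?p = n" by (intro antisym degree_le le_degree) auto
  ultimately show ?thesis unfolding monic_orth_def by (simp add: orth_monom)
qed

lemma monic_orth_exists: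
  assumes "finite I" "inj_on z I" "\<forall>j\<in>I. 0 < w j"
  shows "n \<le> card I \<Longrightarrow> \<exists>p. monic_orth z w I n p"
proof (induction n rule: less_induct)
  case (less n)
  have "monic_orth z w I k (SOME p. monic_orth z w I k p)" if "k < n" for k
  proof (rule someI_ex)
    show "\<exists>p. monic_orth z w I k p" using less.IH[OF that] that less.prems by simp
  qed
  from monic_orth_step[OF assms less.prems this] show ?case ..
qed

lemma monic_orth_opuc:
  assumes "finite I" "inj_on z I" "\<forall>j\<in>I. 0 < w j" "n \<le> card I"
  shows "monic_orth z w I n (opuc z w I n)"
proof -
  have "\<exists>!p. monic_orth z w I n p"
    using monic_orth_exists[OF assms] monic_orth_unique[OF assms] by blast
  moreover have "opuc z w I n = (THE p. monic_orth z w I n p)"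
    unfolding opuc_def monic_orth_def ..
  ultimately show ?thesis by (simp add: theI')
qed

lemma opuc_scale_weights:
  assumes "\<And>j. j \<in> I \<Longrightarrow> w' j = c * w j" "c \<noteq> 0"
  shows "opuc z w' I n = opuc z w I n"
proof -
  have "disc_inner z w' I p q = of_real c * disc_inner z w I p q" for p q
    unfolding disc_inner_def sum_distrib_left using assms(1)
    by (intro sum.cong refl) (simp add: algebra_simps)
  then show ?thesis unfolding opuc_def using assms(2) by simp
qed

lemma disc_sqnorm_monic_eq:
  assumes "finite I" "inj_on z I" "\<forall>j\<in>I. 0 < w j" "n \<le> card I"
    and "degree q = n" "coeff q n = 1"
  shows "disc_sqnorm z w I q = disc_sqnorm z w I (opuc z w I n) + disc_sqnorm z w I (q - opuc z w I n)"
proof -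
  have P: "monic_orth z w I n (opuc z w I n)" by (rule monic_orth_opuc[OF assms(1-4)])
  moreover have "\<forall>i\<ge>n. coeff (q - opuc z w I n) i = 0"
    using P assms(5,6) coeff_diff_monic_eq_0 unfolding monic_orth_def by blast
  ultimately have "disc_inner z w I (opuc z w I n) (q - opuc z w I n) = 0"
    by (rule disc_inner_eq_0_of_monic_orth)
  then show ?thesis using disc_sqnorm_add_orthogonal by fastforce
qed

section \<open>Lagrange interpolation\<close>

definition lagrange_basis :: "(nat \<Rightarrow> complex) \<Rightarrow> nat set \<Rightarrow> nat \<Rightarrow> complex poly"
  where "lagrange_basis z S p = (\<Prod>q\<in>S - {p}. smult (1 / (z p - z q)) [:- z q, 1:])"

definition lagrange_interp :: "(nat \<Rightarrow> complex) \<Rightarrow> nat set \<Rightarrow> (nat \<Rightarrow> complex) \<Rightarrow> complex poly"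
  where "lagrange_interp z S v = (\<Sum>p\<in>S. smult (v p) (lagrange_basis z S p))"

lemma poly_lagrange_basis_self:
  assumes "inj_on z S" "p \<in> S"
  shows "poly (lagrange_basis z S p) (z p) = 1"
  unfolding lagrange_basis_def poly_prod
proof (rule prod.neutral, rule ballI)
  fix q assume "q \<in> S - {p}"
  then have "z p - z q \<noteq> 0" using assms inj_on_eq_iff[OF assms(1)] by auto
  then show "poly (smult (1 / (z p - z q)) [:- z q, 1:]) (z p) = 1" by (simp flip: diff_divide_distrib)
qed

lemma poly_lagrange_basis_other:
  "finite S \<Longrightarrow> q \<in> S \<Longrightarrow> q \<noteq> p \<Longrightarrow> poly (lagrange_basis z S p) (z q) = 0"
  unfolding lagrange_basis_def poly_prod by (rule prod_zero) auto

lemma degree_lagrange_basis: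
  assumes "finite S" "p \<in> S"
  shows "degree (lagrange_basis z S p) < card S"
proof -
  have "degree (lagrange_basis z S p) \<le> sum (degree \<circ> (\<lambda>q. smult (1 / (z p - z q)) [:- z q, 1:])) (S - {p})"
    unfolding lagrange_basis_def by (rule degree_prod_sum_le) (use assms in simp)
  also have "\<dots> \<le> (\<Sum>q\<in>S - {p}. 1)"
    by (intro sum_mono) (simp add: order.trans[OF degree_smult_le])
  also have "\<dots> < card S"
    using assms card_gt_0_iff[of S] by auto
  finally show ?thesis .
qed

lemma coeff_lagrange_interp_eq_0:
  assumes "finite S" "card S \<le> i"
  shows "coeff (lagrange_interp z S v) i = 0"
  unfolding lagrange_interp_def coeff_sum
proof (intro sum.neutral ballI)
  fix p assume "p \<in> S"
  then have "degree (lagrange_basis z S p) < i"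
    using degree_lagrange_basis[OF assms(1)] assms(2) by (meson less_le_trans)
  then show "coeff (smult (v p) (lagrange_basis z S p)) i = 0" by (simp add: coeff_eq_0)
qed

lemma poly_lagrange_interp_node:
  assumes "finite S" "inj_on z S" "q \<in> S"
  shows "poly (lagrange_interp z S v) (z q) = v q"
proof -
  have "poly (lagrange_interp z S v) (z q) = (\<Sum>p\<in>S. v p * poly (lagrange_basis z S p) (z q))"
    unfolding lagrange_interp_def poly_sum by simp
  also have "\<dots> = v q * poly (lagrange_basis z S q) (z q)"
    using assms by (subst sum.remove[OF assms(1,3)]) (auto simp: poly_lagrange_basis_other intro!: sum.neutral)
  finally show ?thesis using poly_lagrange_basis_self[OF assms(2,3)] by simp
qed

lemma lagrange_interp_poly:
  fixes p :: "complex poly"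
  assumes "finite S" "inj_on z S" "\<forall>i\<ge>card S. coeff p i = 0"
  shows "lagrange_interp z S (\<lambda>s. poly p (z s)) = p"
proof -
  have "lagrange_interp z S (\<lambda>s. poly p (z s)) - p = 0"
    using assms by (intro poly_eq_0_of_vanishing[OF assms(1,2)])
      (simp_all add: poly_lagrange_interp_node coeff_lagrange_interp_eq_0)
  then show ?thesis by simp
qed

lemma tendsto_poly_lagrange_interp:
  assumes "\<And>s. s \<in> S \<Longrightarrow> ((\<lambda>t. v t s) \<longlongrightarrow> 0) F"
  shows "((\<lambda>t. poly (lagrange_interp z S (v t)) x) \<longlongrightarrow> 0) F"
  unfolding lagrange_interp_def poly_sum poly_smult
  by (intro tendsto_null_sum tendsto_mult_left_zero assms)

lemma tendsto_coeff_of_tendsto_poly: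
  fixes f :: "'a \<Rightarrow> complex poly" and z :: "nat \<Rightarrow> complex"
  assumes "finite S" "inj_on z S" "\<And>t. \<forall>i\<ge>card S. coeff (f t) i = 0"
    and "\<And>s. s \<in> S \<Longrightarrow> ((\<lambda>t. poly (f t) (z s)) \<longlongrightarrow> 0) F"
  shows "((\<lambda>t. coeff (f t) c) \<longlongrightarrow> 0) F"
proof -
  have "((\<lambda>t. coeff (lagrange_interp z S (\<lambda>s. poly (f t) (z s))) c) \<longlongrightarrow> 0) F"
    unfolding lagrange_interp_def coeff_sum coeff_smult
    by (intro tendsto_null_sum tendsto_mult_left_zero assms)
  then show ?thesis using lagrange_interp_poly[OF assms(1-3)] by simp
qed

section \<open>Polynomials vanishing on a set of nodes\<close>

definition node_poly :: "(nat \<Rightarrow> complex) \<Rightarrow> nat set \<Rightarrow> complex poly"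
  where "node_poly z B = (\<Prod>p\<in>B. [:- z p, 1:])"

lemma poly_node_poly: "poly (node_poly z B) x = (\<Prod>p\<in>B. x - z p)"
  unfolding node_poly_def poly_prod by simp

lemma poly_node_poly_eq_0_iff: "finite B \<Longrightarrow> poly (node_poly z B) x = 0 \<longleftrightarrow> (\<exists>p\<in>B. x = z p)"
  unfolding poly_node_poly by simp

lemma node_poly_monic: "degree (node_poly z B) = card B" "coeff (node_poly z B) (card B) = 1"
proof -
  have "degree (node_poly z B) = (\<Sum>p\<in>B. degree [:- z p, 1:])"
    unfolding node_poly_def by (rule degree_prod_eq_sum_degree) simp
  then show deg: "degree (node_poly z B) = card B" by simp
  have "lead_coeff (node_poly z B) = 1"
    unfolding node_poly_def lead_coeff_prod by simp
  then show "coeff (node_poly z B) (card B) = 1" by (simp add: deg)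
qed

lemma node_poly_dvd:
  assumes "finite B" "inj_on z B" "\<forall>s\<in>B. poly p (z s) = 0"
  shows "node_poly z B dvd p"
  using assms
proof (induction B arbitrary: p rule: finite_induct)
  case empty
  then show ?case by (simp add: node_poly_def)
next
  case (insert a B)
  obtain q where q: "p = [:- z a, 1:] * q"
    using insert.prems(2) by (auto simp: poly_eq_0_iff_dvd elim: dvdE)
  have "\<forall>s\<in>B. poly q (z s) = 0"
    using insert.prems insert.hyps(2) by (auto simp: q inj_on_def)
  then have "node_poly z B dvd q" using insert.IH insert.prems(1) by simp
  moreover have "node_poly z (insert a B) = [:- z a, 1:] * node_poly z B"
    using insert.hyps by (simp add: node_poly_def)
  ultimately show ?case unfolding q by (metis mult_dvd_mono dvd_refl)
qed

lemma node_poly_mult_monic: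
  assumes "degree R = r" "coeff R r = 1"
  shows "degree (node_poly z B * R) = card B + r" "coeff (node_poly z B * R) (card B + r) = 1"
proof -
  have "node_poly z B \<noteq> 0" "R \<noteq> 0" using node_poly_monic(2)[of z B] assms(2) by auto
  then show "degree (node_poly z B * R) = card B + r"
    using assms(1) by (simp add: degree_mult_eq node_poly_monic(1))
  show "coeff (node_poly z B * R) (card B + r) = 1"
    using coeff_mult_degree_sum[of "node_poly z B" R] assms by (simp add: node_poly_monic)
qed

text \<open>On \<open>C = K\<^sub>i\<close> with \<open>B = {1..k (i - 1)}\<close>, these are the weights of \<open>\<mu>^(K\<^sub>i)\<close> before normalisation.\<close>

definition node_weights :: "(nat \<Rightarrow> complex) \<Rightarrow> nat set \<Rightarrow> (nat \<Rightarrow> real) \<Rightarrow> nat \<Rightarrow> real"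
  where "node_weights z B \<mu> j = (cmod (poly (node_poly z B) (z j)))\<^sup>2 * \<mu> j"

lemma node_weights_eq_prod: "node_weights z B \<mu> j = (\<Prod>p\<in>B. (cmod (z j - z p))\<^sup>2) * \<mu> j"
  by (simp add: node_weights_def poly_node_poly prod_power_distrib flip: prod_norm)

lemma node_weights_pos:
  assumes "finite B" "B \<inter> C = {}" "inj_on z (B \<union> C)" "\<forall>j\<in>C. 0 < \<mu> j"
  shows "\<forall>j\<in>C. 0 < node_weights z B \<mu> j"
proof
  fix j assume "j \<in> C"
  have "poly (node_poly z B) (z j) \<noteq> 0"
  proof
    assume "poly (node_poly z B) (z j) = 0"
    then obtain p where "p \<in> B" "z j = z p" using assms(1) poly_node_poly_eq_0_iff by blast
    then have "j = p" using inj_onD[OF assms(3)] \<open>j \<in> C\<close> by blast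
    with \<open>p \<in> B\<close> \<open>j \<in> C\<close> assms(2) show False by blast
  qed
  then show "0 < node_weights z B \<mu> j" using assms(4) \<open>j \<in> C\<close> by (simp add: node_weights_def)
qed

lemma monic_orth_opuc_node_weights:
  assumes "finite B" "finite C" "B \<inter> C = {}" "inj_on z (B \<union> C)" "\<forall>j\<in>C. 0 < \<mu> j" "r \<le> card C"
  shows "monic_orth z (node_weights z B \<mu>) C r (opuc z (node_weights z B \<mu>) C r)"
  using assms node_weights_pos[OF assms(1,3,4,5)] by (intro monic_orth_opuc) (auto intro: inj_on_subset)

lemma disc_sqnorm_node_poly_mult_opuc_le:
  assumes "finite B" "finite C" "B \<inter> C = {}" "inj_on z (B \<union> C)" "\<forall>j\<in>C. 0 < \<mu> j" "r \<le> card C"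
    and p: "degree p = card B + r" "coeff p (card B + r) = 1" "\<forall>s\<in>B. poly p (z s) = 0"
  shows "disc_sqnorm z \<mu> C (node_poly z B * opuc z (node_weights z B \<mu>) C r) \<le> disc_sqnorm z \<mu> C p"
proof -
  define R where "R = opuc z (node_weights z B \<mu>) C r"
  have R: "monic_orth z (node_weights z B \<mu>) C r R"
    unfolding R_def using assms(1-6) by (rule monic_orth_opuc_node_weights)
  then have Q: "degree (node_poly z B * R) = card B + r" "coeff (node_poly z B * R) (card B + r) = 1"
    unfolding monic_orth_def by (auto intro: node_poly_mult_monic)
  have "\<forall>s\<in>B. poly (p - node_poly z B * R) (z s) = 0"
    using p(3) assms(1) by (auto simp: poly_node_poly_eq_0_iff)
  then obtain S where S: "p - node_poly z B * R = node_poly z B * S"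
    using node_poly_dvd assms(1,4) by (metis dvdE inj_on_Un)
  have "\<forall>i\<ge>r. coeff S i = 0"
  proof (cases "S = 0")
    case False
    have "\<forall>i\<ge>card B + r. coeff (node_poly z B * S) i = 0"
      unfolding S[symmetric] using p Q coeff_diff_monic_eq_0 by blast
    moreover have "node_poly z B \<noteq> 0" using node_poly_monic(2)[of z B] by auto
    ultimately have "degree (node_poly z B * S) < card B + r"
      using False by (intro degree_lessI) auto
    then have "degree S < r"
      using False \<open>node_poly z B \<noteq> 0\<close> by (simp add: degree_mult_eq node_poly_monic(1))
    then show ?thesis by (auto intro: coeff_eq_0)
  qed simp
  then have "disc_inner z (node_weights z B \<mu>) C R S = 0" by (rule disc_inner_eq_0_of_monic_orth[OF R])
  then have "disc_inner z \<mu> C (node_poly z B * R) (p - node_poly z B * R) = 0"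
    unfolding S disc_inner_mult_mult node_weights_def .
  from disc_sqnorm_add_orthogonal[OF this]
  have "disc_sqnorm z \<mu> C p = disc_sqnorm z \<mu> C (node_poly z B * R) + disc_sqnorm z \<mu> C (p - node_poly z B * R)"
    by simp
  moreover have "0 \<le> disc_sqnorm z \<mu> C (p - node_poly z B * R)"
    using assms(5) by (intro disc_sqnorm_nonneg) (simp add: less_imp_le)
  ultimately show ?thesis unfolding R_def by linarith
qed

text \<open>Subtracting its Lagrange interpolant on \<open>B\<close> turns \<open>P t\<close> into a competitor for the lower
  bound \<open>A\<close>, at a cost that vanishes as \<open>P t\<close> tends to zero on \<open>B\<close>.\<close>

lemma eventually_disc_sqnorm_gt:
  fixes P :: "'a \<Rightarrow> complex poly"
  assumes "finite B" "inj_on z B" "\<forall>j\<in>C. 0 \<le> \<mu> j" "card B \<le> n"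
    and lower: "\<And>p. degree p = n \<Longrightarrow> coeff p n = 1 \<Longrightarrow> \<forall>s\<in>B. poly p (z s) = 0
                  \<Longrightarrow> A \<le> disc_sqnorm z \<mu> C p"
    and monic: "\<And>t. degree (P t) = n" "\<And>t. coeff (P t) n = 1"
    and vanish: "\<And>s. s \<in> B \<Longrightarrow> ((\<lambda>t. poly (P t) (z s)) \<longlongrightarrow> 0) F"
    and "0 < d"
  shows "eventually (\<lambda>t. A - d < disc_sqnorm z \<mu> C (P t)) F"
proof -
  define E where "E t = lagrange_interp z B (\<lambda>s. poly (P t) (z s))" for t
  define e where "e = min 1 (d / (2 * (\<bar>A\<bar> + 1)))"
  have e: "0 < e" "e \<le> 1" "e * \<bar>A\<bar> \<le> d / 2"
  proof -
    show "0 < e" "e \<le> 1" using \<open>0 < d\<close> by (simp_all add: e_def)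
    have "e * \<bar>A\<bar> \<le> d / (2 * (\<bar>A\<bar> + 1)) * (\<bar>A\<bar> + 1)"
      unfolding e_def using \<open>0 < d\<close> by (intro mult_mono) auto
    also have "\<dots> = d / 2"
      using abs_ge_zero[of A] by (simp add: field_simps)
    finally show "e * \<bar>A\<bar> \<le> d / 2" .
  qed
  have "((\<lambda>t. disc_sqnorm z \<mu> C (E t)) \<longlongrightarrow> 0) F"
    unfolding E_def by (intro tendsto_disc_sqnorm_zero tendsto_poly_lagrange_interp vanish)
  moreover have "0 < e * (d / 2)" using e \<open>0 < d\<close> by simp
  ultimately have "eventually (\<lambda>t. disc_sqnorm z \<mu> C (E t) < e * (d / 2)) F"
    by (rule order_tendstoD)
  then show ?thesis
  proof eventually_elim
    case (elim t)
    have coeff_E: "\<forall>i\<ge>n. coeff (E t) i = 0"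
      using assms(1,4) by (simp add: E_def coeff_lagrange_interp_eq_0)
    have "coeff (P t - E t) n = 1" "\<forall>i>n. coeff (P t - E t) i = 0"
      using monic[of t] coeff_E by (auto simp: coeff_eq_0)
    moreover from this have "degree (P t - E t) = n"
      by (intro antisym degree_le le_degree) auto
    moreover have "\<forall>s\<in>B. poly (P t - E t) (z s) = 0"
      using assms(1,2) by (simp add: E_def poly_lagrange_interp_node)
    ultimately have "A \<le> disc_sqnorm z \<mu> C (P t - E t)" by (intro lower) auto
    then have "(1 - e) * A \<le> (1 - e) * disc_sqnorm z \<mu> C (P t - E t)"
      using e(2) by (intro mult_left_mono) auto
    moreover have "e * A \<le> e * \<bar>A\<bar>" using e(1) by (intro mult_left_mono) auto
    moreover have "(1 - e) * disc_sqnorm z \<mu> C (P t - E t)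
        \<le> disc_sqnorm z \<mu> C (P t) + disc_sqnorm z \<mu> C (E t) / e"
      using disc_sqnorm_add_ge[OF assms(3) e(1), where z = z and p = "P t - E t" and q = "E t"] by simp
    moreover have "disc_sqnorm z \<mu> C (E t) / e < d / 2"
      using elim e(1) by (simp add: pos_divide_less_eq mult.commute)
    ultimately show ?case using e(3) by (simp add: algebra_simps)
  qed
qed

section \<open>Orthogonal polynomials of a tilted measure\<close>

locale tilted_opuc =
  fixes z :: "nat \<Rightarrow> complex" and \<mu> a :: "nat \<Rightarrow> real" and B C D :: "nat set" and r :: nat
  assumes finite: "finite B" "finite C" "finite D"
    and disjoint: "B \<inter> C = {}" "B \<inter> D = {}" "C \<inter> D = {}"
    and inj: "inj_on z (B \<union> C \<union> D)"
    and weight_pos: "\<forall>j\<in>B \<union> C \<union> D. 0 < \<mu> j"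
    and rate_B: "\<forall>j\<in>B. 0 < a j" and rate_C: "\<forall>j\<in>C. a j = 0" and rate_D: "\<forall>j\<in>D. a j < 0"
    and degree_le: "r \<le> card C"
begin

definition tilt :: "real \<Rightarrow> nat \<Rightarrow> real"
  where "tilt t j = exp (t * a j) * \<mu> j"

definition limit_poly :: "complex poly"
  where "limit_poly = node_poly z B * opuc z (node_weights z B \<mu>) C r"

abbreviation Phi :: "real \<Rightarrow> complex poly"
  where "Phi t \<equiv> opuc z (tilt t) (B \<union> C \<union> D) (card B + r)"

lemma tilt_pos: "\<forall>j\<in>B \<union> C \<union> D. 0 < tilt t j"
  using weight_pos by (simp add: tilt_def)

lemma tilt_nonneg: "\<forall>j\<in>B \<union> C \<union> D. 0 \<le> tilt t j"
  using tilt_pos by (simp add: less_imp_le)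

lemma tilt_C: "j \<in> C \<Longrightarrow> tilt t j = \<mu> j"
  using rate_C by (simp add: tilt_def)

lemma mu_le_tilt: "0 \<le> t \<Longrightarrow> j \<in> B \<union> C \<Longrightarrow> \<mu> j \<le> tilt t j"
  using rate_B rate_C weight_pos by (auto simp: tilt_def)

lemma tilt_le_mu: "0 \<le> t \<Longrightarrow> j \<in> D \<Longrightarrow> tilt t j \<le> \<mu> j"
  using rate_D weight_pos by (auto simp: tilt_def mult_nonneg_nonpos)

lemma degree_le_card: "card B + r \<le> card (B \<union> C \<union> D)"
proof -
  have "card B + r \<le> card (B \<union> C)" using finite disjoint degree_le by (simp add: card_Un_disjoint)
  also have "\<dots> \<le> card (B \<union> C \<union> D)" using finite by (intro card_mono) auto
  finally show ?thesis .
qed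

lemma monic_orth_Phi: "monic_orth z (tilt t) (B \<union> C \<union> D) (card B + r) (Phi t)"
  using finite inj tilt_pos degree_le_card by (intro monic_orth_opuc) auto

lemma limit_poly_monic: "degree limit_poly = card B + r" "coeff limit_poly (card B + r) = 1"
  using monic_orth_opuc_node_weights[of B C z \<mu> r] finite disjoint inj weight_pos degree_le
  unfolding limit_poly_def monic_orth_def
  by (auto intro: node_poly_mult_monic inj_on_subset)

lemma limit_poly_vanishes: "s \<in> B \<Longrightarrow> poly limit_poly (z s) = 0"
  using finite by (auto simp: limit_poly_def poly_node_poly_eq_0_iff)

lemma limit_poly_minimal:
  "degree p = card B + r \<Longrightarrow> coeff p (card B + r) = 1 \<Longrightarrow> \<forall>s\<in>B. poly p (z s) = 0
    \<Longrightarrow> disc_sqnorm z \<mu> C limit_poly \<le> disc_sqnorm z \<mu> C p"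
  unfolding limit_poly_def using finite disjoint inj weight_pos degree_le
  by (intro disc_sqnorm_node_poly_mult_opuc_le) (auto intro: inj_on_subset)

lemma tilt_sqnorm_limit_poly:
  "disc_sqnorm z (tilt t) (B \<union> C \<union> D) limit_poly =
    disc_sqnorm z \<mu> C limit_poly + disc_sqnorm z (tilt t) D limit_poly"
proof -
  have "disc_sqnorm z (tilt t) (B \<union> C \<union> D) limit_poly =
      disc_sqnorm z (tilt t) B limit_poly + disc_sqnorm z (tilt t) C limit_poly
      + disc_sqnorm z (tilt t) D limit_poly"
    unfolding disc_sqnorm_def using finite disjoint by (simp add: sum.union_disjoint Int_Un_distrib2)
  moreover have "disc_sqnorm z (tilt t) B limit_poly = 0"
    by (simp add: disc_sqnorm_def limit_poly_vanishes)
  moreover have "disc_sqnorm z (tilt t) C limit_poly = disc_sqnorm z \<mu> C limit_poly"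
    by (simp add: disc_sqnorm_def tilt_C)
  ultimately show ?thesis by simp
qed

lemma tendsto_tilt_sqnorm_limit_poly:
  "((\<lambda>t. disc_sqnorm z (tilt t) (B \<union> C \<union> D) limit_poly) \<longlongrightarrow> disc_sqnorm z \<mu> C limit_poly) at_top"
proof -
  have "((\<lambda>t. exp (t * a j)) \<longlongrightarrow> 0) at_top" if "j \<in> D" for j
  proof -
    have "a j < 0" using rate_D that by blast
    then show ?thesis by real_asymp
  qed
  then have "((\<lambda>t. disc_sqnorm z (tilt t) D limit_poly) \<longlongrightarrow> 0) at_top"
    unfolding disc_sqnorm_def tilt_def
    by (intro tendsto_null_sum tendsto_mult_left_zero) auto
  then show ?thesis unfolding tilt_sqnorm_limit_poly
    using tendsto_add[OF tendsto_const] by fastforce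
qed

lemma tilt_sqnorm_Phi_le:
  assumes "0 \<le> t"
  shows "disc_sqnorm z (tilt t) (B \<union> C \<union> D) (Phi t) \<le> disc_sqnorm z \<mu> (B \<union> C \<union> D) limit_poly"
proof -
  have "disc_sqnorm z (tilt t) (B \<union> C \<union> D) (Phi t) \<le> disc_sqnorm z (tilt t) (B \<union> C \<union> D) limit_poly"
    using disc_sqnorm_monic_eq[OF _ inj tilt_pos degree_le_card limit_poly_monic] finite
      disc_sqnorm_nonneg[OF tilt_nonneg] by fastforce
  also have "\<dots> \<le> disc_sqnorm z \<mu> (B \<union> C \<union> D) limit_poly"
    unfolding disc_sqnorm_def
  proof (intro sum_mono)
    fix j assume "j \<in> B \<union> C \<union> D"
    then show "tilt t j * (cmod (poly limit_poly (z j)))\<^sup>2 \<le> \<mu> j * (cmod (poly limit_poly (z j)))\<^sup>2"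
      using assms by (elim UnE) (auto simp: limit_poly_vanishes tilt_C intro: mult_right_mono tilt_le_mu)
  qed
  finally show ?thesis .
qed

lemma Phi_tendsto_0_on_B:
  assumes "s \<in> B"
  shows "((\<lambda>t. poly (Phi t) (z s)) \<longlongrightarrow> 0) at_top"
proof (rule tendsto_zero_of_sq_norm_le)
  define M where "M = disc_sqnorm z \<mu> (B \<union> C \<union> D) limit_poly"
  show "0 < \<mu> s" using weight_pos assms by blast
  show "eventually (\<lambda>t. \<mu> s * (norm (poly (Phi t) (z s)))\<^sup>2 \<le> M * exp (- (t * a s))) at_top"
    using eventually_ge_at_top[of 0]
  proof eventually_elim
    case (elim t)
    have "tilt t s * (norm (poly (Phi t) (z s)))\<^sup>2 \<le> disc_sqnorm z (tilt t) (B \<union> C \<union> D) (Phi t)"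
      by (rule disc_sqnorm_ge_term) (use finite tilt_nonneg assms in auto)
    then have "exp (t * a s) * (\<mu> s * (norm (poly (Phi t) (z s)))\<^sup>2) \<le> disc_sqnorm z (tilt t) (B \<union> C \<union> D) (Phi t)"
      by (simp add: tilt_def mult.assoc)
    also have "\<dots> \<le> M" unfolding M_def using elim by (rule tilt_sqnorm_Phi_le)
    finally show ?case by (simp add: exp_minus field_simps)
  qed
  have "a s > 0" using rate_B assms by blast
  then have "((\<lambda>t. exp (- (t * a s))) \<longlongrightarrow> 0) at_top" by real_asymp
  then show "((\<lambda>t. M * exp (- (t * a s))) \<longlongrightarrow> 0) at_top" by (rule tendsto_mult_right_zero)
qed

lemma tilt_sqnorm_diff_tendsto_0:
  "((\<lambda>t. disc_sqnorm z (tilt t) (B \<union> C \<union> D) (limit_poly - Phi t)) \<longlongrightarrow> 0) at_top"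
proof (rule order_tendstoI)
  fix d :: real assume "d < 0"
  then show "eventually (\<lambda>t. d < disc_sqnorm z (tilt t) (B \<union> C \<union> D) (limit_poly - Phi t)) at_top"
    using disc_sqnorm_nonneg[OF tilt_nonneg] by (intro always_eventually) (auto intro: less_le_trans)
next
  fix d :: real assume "0 < d"
  let ?A = "disc_sqnorm z \<mu> C limit_poly"
  have "eventually (\<lambda>t. disc_sqnorm z (tilt t) (B \<union> C \<union> D) limit_poly < ?A + d / 2) at_top"
    using tendsto_tilt_sqnorm_limit_poly \<open>0 < d\<close> by (intro order_tendstoD) auto
  moreover have "eventually (\<lambda>t. ?A - d / 2 < disc_sqnorm z \<mu> C (Phi t)) at_top"
  proof (rule eventually_disc_sqnorm_gt[where B = B and n = "card B + r"])
    show "\<forall>j\<in>C. 0 \<le> \<mu> j" using weight_pos by (auto intro: less_imp_le)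
  qed (use finite inj monic_orth_Phi Phi_tendsto_0_on_B limit_poly_minimal \<open>0 < d\<close> in
       \<open>auto simp: monic_orth_def intro: inj_on_subset\<close>)
  ultimately show "eventually (\<lambda>t. disc_sqnorm z (tilt t) (B \<union> C \<union> D) (limit_poly - Phi t) < d) at_top"
  proof eventually_elim
    case (elim t)
    have "disc_sqnorm z \<mu> C (Phi t) = disc_sqnorm z (tilt t) C (Phi t)"
      by (simp add: disc_sqnorm_def tilt_C)
    also have "\<dots> \<le> disc_sqnorm z (tilt t) (B \<union> C \<union> D) (Phi t)"
      by (rule disc_sqnorm_mono_set) (use finite tilt_nonneg in auto)
    finally have "disc_sqnorm z \<mu> C (Phi t) \<le> disc_sqnorm z (tilt t) (B \<union> C \<union> D) (Phi t)" .
    moreover have "disc_sqnorm z (tilt t) (B \<union> C \<union> D) limit_poly =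
        disc_sqnorm z (tilt t) (B \<union> C \<union> D) (Phi t) + disc_sqnorm z (tilt t) (B \<union> C \<union> D) (limit_poly - Phi t)"
      using disc_sqnorm_monic_eq[OF _ inj tilt_pos degree_le_card limit_poly_monic] finite by simp
    ultimately show ?case using elim by linarith
  qed
qed

lemma diff_tendsto_0_on_BC:
  assumes "j \<in> B \<union> C"
  shows "((\<lambda>t. poly (limit_poly - Phi t) (z j)) \<longlongrightarrow> 0) at_top"
proof (rule tendsto_zero_of_sq_norm_le[OF _ _ tilt_sqnorm_diff_tendsto_0])
  show "0 < \<mu> j" using weight_pos assms by blast
  show "eventually (\<lambda>t. \<mu> j * (norm (poly (limit_poly - Phi t) (z j)))\<^sup>2
      \<le> disc_sqnorm z (tilt t) (B \<union> C \<union> D) (limit_poly - Phi t)) at_top"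
    using eventually_ge_at_top[of 0]
  proof eventually_elim
    case (elim t)
    have "\<mu> j * (norm (poly (limit_poly - Phi t) (z j)))\<^sup>2 \<le> tilt t j * (norm (poly (limit_poly - Phi t) (z j)))\<^sup>2"
      using mu_le_tilt[OF elim assms] by (rule mult_right_mono) simp
    also have "\<dots> \<le> disc_sqnorm z (tilt t) (B \<union> C \<union> D) (limit_poly - Phi t)"
      by (rule disc_sqnorm_ge_term) (use finite tilt_nonneg assms in auto)
    finally show ?case .
  qed
qed

theorem tendsto_coeff_Phi: "((\<lambda>t. coeff (Phi t) c) \<longlongrightarrow> coeff limit_poly c) at_top"
proof -
  have "((\<lambda>t. coeff (limit_poly - Phi t) c) \<longlongrightarrow> 0) at_top"
  proof (rule tendsto_coeff_of_tendsto_poly[of "B \<union> C"])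
    show "\<forall>i\<ge>card (B \<union> C). coeff (limit_poly - Phi t) i = 0" for t
    proof (intro allI impI)
      fix i assume "card (B \<union> C) \<le> i"
      then have "card B + r \<le> i" using finite disjoint degree_le by (simp add: card_Un_disjoint)
      then show "coeff (limit_poly - Phi t) i = 0"
        using limit_poly_monic monic_orth_Phi[of t] unfolding monic_orth_def
        by (intro coeff_diff_monic_eq_0) auto
    qed
  qed (use finite inj diff_tendsto_0_on_BC in \<open>auto intro: inj_on_subset\<close>)
  then have "((\<lambda>t. coeff limit_poly c - coeff (limit_poly - Phi t) c) \<longlongrightarrow> coeff limit_poly c - 0) at_top"
    by (intro tendsto_diff tendsto_const)
  then show ?thesis by simp
qed

end

section \<open>K-groups\<close>

lemma opuc_tilt_weights_eq:
  assumes "\<forall>j\<in>{1..m}. 0 < \<mu> j" "0 < m"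
  shows "opuc z (tilt_weights z G \<mu> m t) {1..m} n = opuc z (\<lambda>j. exp (t * (G (z j) - g)) * \<mu> j) {1..m} n"
proof -
  define S where "S = (\<Sum>r\<in>{1..m}. exp (t * G (z r)) * \<mu> r)"
  have "0 < S" using assms unfolding S_def by (intro sum_pos) auto
  then show ?thesis
    by (intro opuc_scale_weights[where c = "exp (t * g) / S"])
      (simp_all add: tilt_weights_def S_def right_diff_distrib exp_diff)
qed

lemma opuc_Kweights_eq:
  assumes "k (i - 1) < k i" "inj_on z {1..k i}" "\<forall>j\<in>Kgroup k i. 0 < \<mu> j"
  shows "opuc z (Kweights z \<mu> k i) (Kgroup k i) n = opuc z (node_weights z {1..k (i - 1)} \<mu>) (Kgroup k i) n"
proof -
  have "{1..k (i - 1)} \<union> Kgroup k i = {1..k i}" using assms(1) by (auto simp: Kgroup_def)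
  then have "\<forall>j\<in>Kgroup k i. 0 < node_weights z {1..k (i - 1)} \<mu> j"
    using assms by (intro node_weights_pos) (auto simp: Kgroup_def)
  moreover have "Kgroup k i \<noteq> {}" using assms(1) by (auto simp: Kgroup_def)
  ultimately have "0 < (\<Sum>j\<in>Kgroup k i. node_weights z {1..k (i - 1)} \<mu> j)"
    by (intro sum_pos) (auto simp: Kgroup_def)
  then show ?thesis
    by (intro opuc_scale_weights[where c = "1 / (\<Sum>j\<in>Kgroup k i. node_weights z {1..k (i - 1)} \<mu> j)"])
      (simp_all add: Kweights_def node_weights_eq_prod)
qed

lemma Kgroup_bounds:
  fixes k :: "nat \<Rightarrow> nat"
  assumes "\<And>i. i < L \<Longrightarrow> k i < k (Suc i)" "1 \<le> i" "i \<le> L"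
  shows "k (i - 1) < k i" "k i \<le> k L"
proof -
  show "k (i - 1) < k i" using assms(1)[of "i - 1"] assms(2,3) by simp
  show "k i \<le> k L"
    using assms(3)
  proof (induction rule: dec_induct)
    case (step n)
    then show ?case using assms(1)[OF step(2)] by linarith
  qed simp
qed

lemma Kgroup_levels:
  fixes f :: "nat \<Rightarrow> real" and k :: "nat \<Rightarrow> nat"
  assumes ord: "\<And>i j. 1 \<le> i \<Longrightarrow> i \<le> j \<Longrightarrow> j \<le> m \<Longrightarrow> f j \<le> f i"
    and k0: "k 0 = 0" and kL: "k L = m" and kmono: "\<And>i. i < L \<Longrightarrow> k i < k (Suc i)"
    and kconst: "\<And>i a b. 1 \<le> i \<Longrightarrow> i \<le> L \<Longrightarrow> a \<in> Kgroup k i \<Longrightarrow> b \<in> Kgroup k i \<Longrightarrow> f a = f b"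
    and kmax: "\<And>i. 1 \<le> i \<Longrightarrow> i < L \<Longrightarrow> f (k i) \<noteq> f (k i + 1)"
    and i: "1 \<le> i" "i \<le> L" and l: "l \<in> Kgroup k i"
  shows "\<forall>j\<in>{1..k (i - 1)}. f l < f j" "\<forall>j\<in>{k i + 1..m}. f j < f l"
proof -
  have k: "k (i - 1) < k i" "k i \<le> m" using Kgroup_bounds[where k = k and L = L, OF kmono i] kL by auto
  have level: "f j = f l" if "k (i - 1) < j" "j \<le> k i" for j
    using kconst[OF i _ l] that by (simp add: Kgroup_def)
  show "\<forall>j\<in>{1..k (i - 1)}. f l < f j"
  proof
    fix j assume j: "j \<in> {1..k (i - 1)}"
    then have "1 \<le> i - 1" "i - 1 < L" using i k0 by (auto intro: ccontr)
    then have "f (k (i - 1)) \<noteq> f (k (i - 1) + 1)" by (rule kmax)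
    moreover have "f (k (i - 1)) \<le> f j" "f (k (i - 1) + 1) \<le> f (k (i - 1))"
      using j k by (auto intro!: ord)
    moreover have "f (k (i - 1) + 1) = f l" using k by (intro level) auto
    ultimately show "f l < f j" by linarith
  qed
  show "\<forall>j\<in>{k i + 1..m}. f j < f l"
  proof
    fix j assume j: "j \<in> {k i + 1..m}"
    then have "i < L" using i kL by (auto intro: ccontr)
    then have "f (k i) \<noteq> f (k i + 1)" using i by (intro kmax) auto
    moreover have "f j \<le> f (k i + 1)" "f (k i + 1) \<le> f (k i)"
      using j k by (auto intro!: ord)
    moreover have "f (k i) = f l" using k by (intro level) auto
    ultimately show "f j < f l" by linarith
  qed
qed

theorem theorem3p4:
  fixes z :: "nat \<Rightarrow> complex" and \<mu> :: "nat \<Rightarrow> real" and G :: "complex \<Rightarrow> real"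
    and m L :: nat and k :: "nat \<Rightarrow> nat"
  assumes dist: "inj_on z {1..m}"
    and circ: "\<And>j. j \<in> {1..m} \<Longrightarrow> cmod (z j) = 1"
    and pos: "\<And>j. j \<in> {1..m} \<Longrightarrow> \<mu> j > 0"
    and tot: "(\<Sum>j\<in>{1..m}. \<mu> j) = 1"
    and ord: "\<And>i j. 1 \<le> i \<Longrightarrow> i \<le> j \<Longrightarrow> j \<le> m \<Longrightarrow> G (z j) \<le> G (z i)"
    and k0: "k 0 = 0" and kL: "k L = m"
    and kmono: "\<And>i. i < L \<Longrightarrow> k i < k (Suc i)"
    and kconst: "\<And>i a b. 1 \<le> i \<Longrightarrow> i \<le> L \<Longrightarrow> a \<in> Kgroup k i \<Longrightarrow> b \<in> Kgroup k i
                  \<Longrightarrow> G (z a) = G (z b)"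
    and kmax: "\<And>i. 1 \<le> i \<Longrightarrow> i < L \<Longrightarrow> G (z (k i)) \<noteq> G (z (k i + 1))"
    and i: "1 \<le> i" "i \<le> L"
    and l: "l \<in> Kgroup k i"
  shows "\<forall>c. ((\<lambda>t::real. coeff (opuc z (tilt_weights z G \<mu> m t) {1..m} l) c)
            \<longlongrightarrow> coeff ((\<Prod>p\<in>{1..k (i - 1)}. [:- z p, 1:]) *
                    opuc z (Kweights z \<mu> k i) (Kgroup k i) (l - k (i - 1))) c) at_top"
proof -
  have k: "k (i - 1) < k i" "k i \<le> m" using Kgroup_bounds[where k = k and L = L, OF kmono i] kL by auto
  have l_bounds: "k (i - 1) < l" "l \<le> k i" using l by (auto simp: Kgroup_def)
  have supp: "{1..k (i - 1)} \<union> Kgroup k i \<union> {k i + 1..m} = {1..m}" using k by (auto simp: Kgroup_def)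
  note levels = Kgroup_levels[where f = "\<lambda>j. G (z j)", OF ord k0 kL kmono kconst kmax i l]
  interpret tilted_opuc z \<mu> "\<lambda>j. G (z j) - G (z l)" "{1..k (i - 1)}" "Kgroup k i" "{k i + 1..m}" "l - k (i - 1)"
  proof unfold_locales
    show "inj_on z ({1..k (i - 1)} \<union> Kgroup k i \<union> {k i + 1..m})" unfolding supp by (rule dist)
    show "\<forall>j\<in>{1..k (i - 1)} \<union> Kgroup k i \<union> {k i + 1..m}. 0 < \<mu> j" unfolding supp using pos by blast
    show "\<forall>j\<in>Kgroup k i. G (z j) - G (z l) = 0" using kconst[OF i _ l] by simp
  qed (use levels l_bounds in \<open>auto simp: Kgroup_def\<close>)
  have Phi_eq: "opuc z (tilt_weights z G \<mu> m t) {1..m} l = Phi t" for t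
    using opuc_tilt_weights_eq[of m \<mu> z G t l "G (z l)"] pos k l_bounds supp
    by (simp add: tilt_def[abs_def])
  have Kweights_eq: "opuc z (Kweights z \<mu> k i) (Kgroup k i) n =
      opuc z (node_weights z {1..k (i - 1)} \<mu>) (Kgroup k i) n" for n
    using k pos by (intro opuc_Kweights_eq inj_on_subset[OF dist]) (auto simp: Kgroup_def)
  have limit_eq: "(\<Prod>p\<in>{1..k (i - 1)}. [:- z p, 1:]) * opuc z (Kweights z \<mu> k i) (Kgroup k i) (l - k (i - 1))
      = limit_poly"
    unfolding limit_poly_def node_poly_def Kweights_eq ..
  show ?thesis unfolding Phi_eq limit_eq using tendsto_coeff_Phi by blast
qed

end
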